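(* In the full-information matching model described in the context, under the ACR policy $\pi^{\mathrm{ACR}}$, for every time horizon $T\ge0$, every initial state $A\in\mathbb{Z}_{\ge0}^{\ell+1}$ and every $i\in\mathcal{L}$, $$1+\mathbb{E}[M^{\pi^{\mathrm{ACR}}}(T)\mid A^{(0)}=A]\ \ge\ \mathbb{E}[M^{\pi^{\mathrm{ACR}}}(T)\mid A^{(0)}=A+e_0]\ \ge\ \mathbb{E}[M^{\pi^{\mathrm{ACR}}}(T)\mid A^{(0)}=A+e_i],$$ where $e_i\in\mathbb{Z}_{\ge0}^{\ell+1}$ is the $i$-th unit vector.
   Context: Job/agent types are $\mathcal{L}=\{0,1,\dots,\ell\}$. Agents of type $i$ arrive by a Poisson process of rate $\lambda_i>0$, jobs of type $j$ by a Poisson process of rate $\mu_j>0$, all independent. A type $0$ agent can fulfill every job type; a type $i\ge1$ agent only type $i$ jobs. Unmatched jobs are lost at arrival. Waiting agents abandon independently at exponential rate $\theta>0$; matched agents leave. The state $A=(A_0,\dots,A_\ell)$ counts waiting agents of each type, $A^{(0)}$ is the initial state, and $M^\pi(T)$ is the number of matches in $[0,T]$ under policy $\pi$. The ACR policy assigns an arriving type $j$ job to a uniformly random waiting type $j$ agent if one exists, otherwise to a uniformly random waiting type $0$ agent if one exists, otherwise the job is lost. *)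

theory Defs
  imports "HOL-Analysis.Analysis"
begin

text \<open>States: A :: nat => nat, coordinates 0..l are the queue lengths of waiting
agents of each type.  Parameters: l (number of specialised types), lam, mu
(arrival rates of agents / jobs), th (abandonment rate).\<close>

definition acr_job :: "nat \<Rightarrow> (nat \<Rightarrow> nat) \<Rightarrow> nat \<times> (nat \<Rightarrow> nat)" where
  "acr_job j A =
     (if A j > 0 then (1, A(j := A j - 1))
      else if A 0 > 0 then (1, A(0 := A 0 - 1))
      else (0, A))"

text \<open>All transitions of the ACR-controlled chain from state A:
  (rate, reward = number of matches, successor state).\<close>
definition acr_trans ::
  "nat \<Rightarrow> (nat \<Rightarrow> real) \<Rightarrow> (nat \<Rightarrow> real) \<Rightarrow> real \<Rightarrow> (nat \<Rightarrow> nat)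
     \<Rightarrow> (real \<times> nat \<times> (nat \<Rightarrow> nat)) list" where
  "acr_trans l lam mu th A =
     map (\<lambda>i. (lam i, 0, A(i := A i + 1))) [0..<Suc l]
   @ map (\<lambda>j. (mu j, fst (acr_job j A), snd (acr_job j A))) [0..<Suc l]
   @ map (\<lambda>i. (th * real (A i), 0, A(i := A i - 1))) [0..<Suc l]"

definition acr_rate ::
  "nat \<Rightarrow> (nat \<Rightarrow> real) \<Rightarrow> (nat \<Rightarrow> real) \<Rightarrow> real \<Rightarrow> (nat \<Rightarrow> nat) \<Rightarrow> real" where
  "acr_rate l lam mu th A = (\<Sum>(r, _, _) \<leftarrow> acr_trans l lam mu th A. r)"

text \<open>Expected number of matches in [0,t] counting only the first n jumps of the
  chain started in A (first-jump decomposition: the first jump happens at an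
  Exp(q) time s, and takes transition (r,k,B) with probability r/q).\<close>
fun acr_EM_n ::
  "nat \<Rightarrow> (nat \<Rightarrow> real) \<Rightarrow> (nat \<Rightarrow> real) \<Rightarrow> real \<Rightarrow> nat \<Rightarrow> real \<Rightarrow> (nat \<Rightarrow> nat) \<Rightarrow> real" where
  "acr_EM_n l lam mu th 0 t A = 0"
| "acr_EM_n l lam mu th (Suc n) t A =
     integral {0..t} (\<lambda>s. exp (- acr_rate l lam mu th A * s) *
        (\<Sum>(r, k, B) \<leftarrow> acr_trans l lam mu th A.
            r * (real k + acr_EM_n l lam mu th n (t - s) B)))"

text \<open>E[M^ACR(t) | A(0) = A]: limit (supremum) over the number of jumps.\<close>
definition acr_EM ::
  "nat \<Rightarrow> (nat \<Rightarrow> real) \<Rightarrow> (nat \<Rightarrow> real) \<Rightarrow> real \<Rightarrow> real \<Rightarrow> (nat \<Rightarrow> nat) \<Rightarrow> real" where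
  "acr_EM l lam mu th t A = (SUP n. acr_EM_n l lam mu th n t A)"

definition add_unit :: "(nat \<Rightarrow> nat) \<Rightarrow> nat \<Rightarrow> (nat \<Rightarrow> nat)" where
  "add_unit A i = A(i := A i + 1)"

end

theory Submission
  imports Defs
begin

(*
  Write EM n t A for the expected number of matches in [0, t] counted over the first n
  jumps, so that the expected number of matches is the supremum over n. Both inequalities
  are proved for every EM n t by induction on n, and they pass to the supremum.

  The first jump of the chain from A happens at rate q = rate A, and the states A + e_j
  jump at rate q + th, so EM (Suc n) t (A + e_j) is a convolution of the one-step gain with
  exp (-(q + th) s). Since exp_conv (q + th) (g + th * exp_conv q g) = exp_conv q g, the
  extra abandonment clock of the added agent acts like a fictitious self-loop. This
  reduces the induction step to a pointwise comparison of the one-step gains. That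
  comparison is a coupling of the chains started in A + e_0 and A: they make the same
  moves until the extra flexible agent serves a job that A cannot serve (at most one extra
  match) or abandons (the chains merge). Also, a flexible agent can serve every job that a
  specialised agent of type i can serve, so A + e_i does no better than A + e_0.
*)

lemma sum_list_map_upt_Suc: "sum_list (map f [0..<Suc l]) = (\<Sum>k\<le>l. f k)"
  by (simp only: interv_sum_list_conv_sum_set_nat set_upt atLeast0LessThan lessThan_Suc_atMost)

lemma SUP_le_add_SUP:
  fixes f g :: "nat \<Rightarrow> real"
  assumes "bdd_above (range g)" "\<And>n. f n \<le> c + g n"
  shows "(SUP n. f n) \<le> c + (SUP n. g n)"
proof (rule cSUP_least)
  show "f n \<le> c + (SUP n. g n)" for n
    using assms(2)[of n] cSUP_upper[OF UNIV_I assms(1), of n] by linarith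
qed simp

definition exp_conv :: "real \<Rightarrow> (real \<Rightarrow> real) \<Rightarrow> real \<Rightarrow> real" where
  "exp_conv p f t = integral {0..t} (\<lambda>s. exp (- p * s) * f (t - s))"

lemma integral_reflect_interval:
  fixes g :: "real \<Rightarrow> real"
  shows "integral {0..t} (\<lambda>s. g (t - s)) = integral {0..t} g"
proof -
  have "integral {0..t} (\<lambda>s. g (t - s)) = integral {- 0 .. - (- t)} (\<lambda>x. (\<lambda>y. g (y + t)) (- x))"
    by simp
  also have "\<dots> = integral {0 - t .. t - t} (\<lambda>y. g (y + t))"
    using Henstock_Kurzweil_Integration.integral_reflect_real[of 0 "- t" "\<lambda>y. g (y + t)"] by simp
  also have "\<dots> = integral {0..t} g"
    by (rule integral_shift_real_ivl)
  finally show ?thesis .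
qed

lemma exp_conv_eq:
  "exp_conv p f t = exp (- p * t) * integral {0..t} (\<lambda>u. exp (p * u) * f u)"
proof -
  have "exp_conv p f t = integral {0..t} (\<lambda>s. (\<lambda>u. exp (- p * (t - u)) * f u) (t - s))"
    unfolding exp_conv_def by simp
  also have "\<dots> = integral {0..t} (\<lambda>u. exp (- p * t) * (exp (p * u) * f u))"
    by (subst integral_reflect_interval) (simp add: algebra_simps exp_add[symmetric])
  finally show ?thesis
    by simp
qed

lemma continuous_on_exp_conv:
  assumes "continuous_on {0..T} f"
  shows "continuous_on {0..T} (exp_conv p f)"
proof -
  have "(\<lambda>u. exp (p * u) * f u) integrable_on {0..T}"
    by (intro integrable_continuous_real continuous_intros assms)
  then have "continuous_on {0..T} (\<lambda>t. integral {0..t} (\<lambda>u. exp (p * u) * f u))"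
    by (rule indefinite_integral_continuous_1)
  then show ?thesis
    unfolding exp_conv_eq[abs_def] by (intro continuous_intros)
qed

lemma exp_conv_mono:
  assumes "continuous_on {0..t} f" "continuous_on {0..t} g" "\<And>u. u \<in> {0..t} \<Longrightarrow> f u \<le> g u"
  shows "exp_conv p f t \<le> exp_conv p g t"
  unfolding exp_conv_eq
  by (intro mult_left_mono integral_le integrable_continuous_real continuous_intros assms)
     (simp_all add: assms(3))

lemma exp_conv_nonneg:
  assumes "continuous_on {0..t} f" "\<And>u. u \<in> {0..t} \<Longrightarrow> 0 \<le> f u"
  shows "0 \<le> exp_conv p f t"
  using exp_conv_mono[of t "\<lambda>_. 0" f p] assms by (simp add: exp_conv_def)

lemma exp_conv_add:
  assumes "continuous_on {0..t} f" "continuous_on {0..t} g"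
  shows "exp_conv p (\<lambda>u. f u + g u) t = exp_conv p f t + exp_conv p g t"
  unfolding exp_conv_eq
  by (simp add: distrib_left integral_add integrable_continuous_real continuous_intros assms)

lemma exp_conv_rate_const:
  assumes "0 \<le> t"
  shows "exp_conv q (\<lambda>_. q) t = 1 - exp (- q * t)"
proof -
  have "((\<lambda>s. exp (- q * s) * q) has_integral (- exp (- q * t)) - (- exp (- q * 0))) {0..t}"
    using assms
    by (intro fundamental_theorem_of_calculus)
       (auto intro!: derivative_eq_intros simp: has_real_derivative_iff_has_vector_derivative[symmetric])
  then have "integral {0..t} (\<lambda>s. exp (- q * s) * q) = 1 - exp (- q * t)"
    by (intro integral_unique) simp
  then show ?thesis
    unfolding exp_conv_def by simp
qed

lemma exp_conv_affine:
  assumes "0 \<le> t"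
  shows "exp_conv q (\<lambda>u. M + q * M * u) t = M * t"
proof -
  have "((\<lambda>s. exp (- q * s) * (M + q * M * (t - s))) has_integral
       (- exp (- q * t) * M * (t - t)) - (- exp (- q * 0) * M * (t - 0))) {0..t}"
    using assms
    by (intro fundamental_theorem_of_calculus)
       (auto intro!: derivative_eq_intros
             simp: has_real_derivative_iff_has_vector_derivative[symmetric] algebra_simps)
  then have "integral {0..t} (\<lambda>s. exp (- q * s) * (M + q * M * (t - s))) = M * t"
    by (intro integral_unique) simp
  then show ?thesis
    unfolding exp_conv_def by simp
qed

lemma exp_conv_resolvent:
  assumes "0 \<le> t" "continuous_on {0..t} b"
  shows "exp_conv (q + c) (\<lambda>u. b u + c * exp_conv q b u) t = exp_conv q b t"
proof -
  define I where "I u = integral {0..u} (\<lambda>v. exp (q * v) * b v)" for u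
  have I_deriv: "(I has_vector_derivative exp (q * u) * b u) (at u within {0..t})"
    if "u \<in> {0..t}" for u
    unfolding I_def
    by (rule integral_has_vector_derivative[OF _ that]) (intro continuous_intros assms(2))
  have exp_deriv: "((\<lambda>u. exp (c * u)) has_vector_derivative c * exp (c * u)) (at u within {0..t})" for u
    by (auto intro!: derivative_eq_intros simp: has_real_derivative_iff_has_vector_derivative[symmetric])
  have integrand: "exp ((q + c) * u) * (b u + c * exp_conv q b u)
      = c * exp (c * u) * I u + exp (c * u) * (exp (q * u) * b u)" for u
  proof -
    have "exp ((q + c) * u) * exp (- q * u) = exp (c * u)"
      by (simp add: algebra_simps flip: exp_add)
    then show ?thesis
      by (simp add: exp_conv_eq I_def algebra_simps flip: exp_add)
  qed
  have "((\<lambda>u. exp (c * u) * I u) has_vector_derivative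
      exp ((q + c) * u) * (b u + c * exp_conv q b u)) (at u within {0..t})" if "u \<in> {0..t}" for u
    unfolding integrand using has_vector_derivative_mult[OF exp_deriv I_deriv[OF that]]
    by (simp add: algebra_simps)
  then have "((\<lambda>u. exp ((q + c) * u) * (b u + c * exp_conv q b u)) has_integral
      exp (c * t) * I t - exp (c * 0) * I 0) {0..t}"
    by (intro fundamental_theorem_of_calculus[OF assms(1)])
  then have "integral {0..t} (\<lambda>u. exp ((q + c) * u) * (b u + c * exp_conv q b u)) = exp (c * t) * I t"
    by (simp add: integral_unique I_def)
  then have "exp_conv (q + c) (\<lambda>u. b u + c * exp_conv q b u) t = exp (- (q + c) * t) * exp (c * t) * I t"
    by (simp only: exp_conv_eq mult.assoc)
  also have "\<dots> = exp_conv q b t"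
    by (simp add: exp_conv_eq I_def algebra_simps flip: exp_add)
  finally show ?thesis .
qed

lemma exp_conv_le_add_exp_conv:
  assumes "0 \<le> t" "0 \<le> K" "continuous_on {0..t} a" "continuous_on {0..t} b"
    and "\<And>u. u \<in> {0..t} \<Longrightarrow> a u \<le> (q + c) * K + (b u + c * exp_conv q b u)"
  shows "exp_conv (q + c) a t \<le> K + exp_conv q b t"
proof -
  have cont: "continuous_on {0..t} (\<lambda>u. b u + c * exp_conv q b u)"
    by (intro continuous_intros continuous_on_exp_conv assms(4))
  have "exp_conv (q + c) a t \<le> exp_conv (q + c) (\<lambda>u. K * (q + c) + (b u + c * exp_conv q b u)) t"
    using assms(5) by (intro exp_conv_mono assms(3) continuous_intros cont) (simp add: mult.commute)
  also have "\<dots> = exp_conv (q + c) (\<lambda>_. K * (q + c)) t + exp_conv (q + c) (\<lambda>u. b u + c * exp_conv q b u) t"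
    by (rule exp_conv_add) (intro continuous_intros, rule cont)
  also have "exp_conv (q + c) (\<lambda>_. K * (q + c)) t = K * (1 - exp (- (q + c) * t))"
    using exp_conv_rate_const[OF assms(1), of "q + c"] by (simp add: exp_conv_def mult.left_commute)
  also have "exp_conv (q + c) (\<lambda>u. b u + c * exp_conv q b u) t = exp_conv q b t"
    by (rule exp_conv_resolvent[OF assms(1,4)])
  finally have "exp_conv (q + c) a t \<le> K * (1 - exp (- (q + c) * t)) + exp_conv q b t" .
  moreover have "K * (1 - exp (- (q + c) * t)) \<le> K"
    using assms(2) by (simp add: mult_left_le)
  ultimately show ?thesis
    by linarith
qed

definition remove_unit :: "(nat \<Rightarrow> nat) \<Rightarrow> nat \<Rightarrow> (nat \<Rightarrow> nat)" where
  "remove_unit A i = A(i := A i - 1)"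

lemma add_unit_commute: "add_unit (add_unit A i) j = add_unit (add_unit A j) i"
  by (auto simp: add_unit_def fun_eq_iff)

lemma remove_unit_add_unit_same [simp]: "remove_unit (add_unit A i) i = A"
  by (auto simp: add_unit_def remove_unit_def fun_eq_iff)

lemma remove_unit_add_unit: "k \<noteq> j \<Longrightarrow> remove_unit (add_unit A j) k = add_unit (remove_unit A k) j"
  by (auto simp: add_unit_def remove_unit_def fun_eq_iff)

lemma add_unit_remove_unit: "0 < A k \<Longrightarrow> add_unit (remove_unit A k) k = A"
  by (auto simp: add_unit_def remove_unit_def fun_eq_iff)

lemma acr_job_eq:
  "acr_job k A = (if 0 < A k then (1, remove_unit A k) else if 0 < A 0 then (1, remove_unit A 0) else (0, A))"
  by (simp add: acr_job_def remove_unit_def)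

lemma acr_job_add_flex:
  "acr_job k (add_unit A 0) = (if k \<noteq> 0 \<and> 0 < A k then (1, add_unit (remove_unit A k) 0) else (1, A))"
  by (auto simp: acr_job_def add_unit_def remove_unit_def fun_eq_iff)

definition flex_agent_bounds :: "nat \<Rightarrow> ((nat \<Rightarrow> nat) \<Rightarrow> real) \<Rightarrow> bool" where
  "flex_agent_bounds l F \<longleftrightarrow>
     (\<forall>A. F (add_unit A 0) \<le> 1 + F A) \<and> (\<forall>A j. j \<le> l \<longrightarrow> F (add_unit A j) \<le> F (add_unit A 0))"

context
  fixes l :: nat and F :: "(nat \<Rightarrow> nat) \<Rightarrow> real"
  assumes bounds: "flex_agent_bounds l F"
begin

lemma flex_agent_bounds_add_flex: "F (add_unit A 0) \<le> 1 + F A"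
  using bounds by (simp add: flex_agent_bounds_def)

lemma flex_agent_bounds_add_spec: "j \<le> l \<Longrightarrow> F (add_unit A j) \<le> F (add_unit A 0)"
  using bounds by (simp add: flex_agent_bounds_def)

lemma flex_agent_bounds_remove_unit:
  assumes "k \<le> l" "0 < A k"
  shows "F A \<le> 1 + F (remove_unit A k)"
  using flex_agent_bounds_add_spec[OF assms(1), of "remove_unit A k"]
    flex_agent_bounds_add_flex[of "remove_unit A k"]
  by (simp add: add_unit_remove_unit[of A k, OF assms(2)])

lemma acr_job_value_ge:
  assumes "k \<le> l"
  shows "F A \<le> real (fst (acr_job k A)) + F (snd (acr_job k A))"
  using flex_agent_bounds_remove_unit[OF assms] flex_agent_bounds_remove_unit[of 0]
  by (simp add: acr_job_eq)

lemma acr_job_value_add_flex: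
  assumes "k \<le> l"
  shows "real (fst (acr_job k (add_unit A 0))) + F (snd (acr_job k (add_unit A 0)))
    \<le> 1 + (real (fst (acr_job k A)) + F (snd (acr_job k A)))"
proof (cases "k \<noteq> 0 \<and> 0 < A k")
  case True
  then show ?thesis
    using flex_agent_bounds_add_flex[of "remove_unit A k"] by (simp add: acr_job_add_flex acr_job_eq[of k A])
next
  case False
  then show ?thesis
    using acr_job_value_ge[OF assms, of A] by (auto simp: acr_job_add_flex)
qed

lemma acr_job_value_add_flex_after:
  "real (fst (acr_job k A)) + F (add_unit (snd (acr_job k A)) 0)
    \<le> real (fst (acr_job k (add_unit A 0))) + F (snd (acr_job k (add_unit A 0)))"
  using flex_agent_bounds_add_flex[of A]
  by (cases "k \<noteq> 0 \<and> 0 < A k") (auto simp: acr_job_add_flex acr_job_eq[of k A] add_unit_remove_unit)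

lemma acr_job_value_add_spec:
  assumes "k \<le> l" "j \<le> l"
  shows "real (fst (acr_job k (add_unit A j))) + F (snd (acr_job k (add_unit A j)))
    \<le> real (fst (acr_job k (add_unit A 0))) + F (snd (acr_job k (add_unit A 0)))"
proof -
  consider "j = 0" | "j \<noteq> 0" "k = j" | "j \<noteq> 0" "k \<noteq> j"
    by blast
  then show ?thesis
  proof cases
    case 1
    then show ?thesis by simp
  next
    case 2
    then have "acr_job k (add_unit A j) = (1, A)"
      by (simp add: acr_job_eq) (simp add: add_unit_def)
    then show ?thesis
      using 2 flex_agent_bounds_add_spec[OF assms(1), of "remove_unit A k"]
      by (cases "A k = 0") (simp_all add: acr_job_add_flex add_unit_remove_unit)
  next
    case 3
    then have "acr_job k (add_unit A j) = (fst (acr_job k A), add_unit (snd (acr_job k A)) j)"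
      by (auto simp: acr_job_eq remove_unit_add_unit) (simp_all add: add_unit_def)
    then have "real (fst (acr_job k (add_unit A j))) + F (snd (acr_job k (add_unit A j)))
        \<le> real (fst (acr_job k A)) + F (add_unit (snd (acr_job k A)) 0)"
      using flex_agent_bounds_add_spec[OF assms(2)] by simp
    also have "\<dots> \<le> real (fst (acr_job k (add_unit A 0))) + F (snd (acr_job k (add_unit A 0)))"
      by (rule acr_job_value_add_flex_after)
    finally show ?thesis .
  qed
qed

end

lemma abandon_add_unit:
  "real (add_unit A j k) * F (remove_unit (add_unit A j) k)
     = real (A k) * F (add_unit (remove_unit A k) j) + (if k = j then F A else 0)"
proof (cases "k = j")
  case True
  have "add_unit A j k = A k + 1"
    using True by (simp add: add_unit_def)
  then have "real (add_unit A j k) * F (remove_unit (add_unit A j) k) = real (A k) * F A + F A"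
    using True by (simp add: distrib_right)
  also have "real (A k) * F A = real (A k) * F (add_unit (remove_unit A k) j)"
    using True by (cases "A k = 0") (simp_all add: add_unit_remove_unit)
  finally show ?thesis
    using True by simp
next
  case False
  then show ?thesis
    by (simp add: remove_unit_add_unit) (simp add: add_unit_def)
qed

locale acr_params =
  fixes l :: nat and lam mu :: "nat \<Rightarrow> real" and th :: real
begin

abbreviation rate :: "(nat \<Rightarrow> nat) \<Rightarrow> real" where
  "rate \<equiv> acr_rate l lam mu th"

abbreviation EM :: "nat \<Rightarrow> real \<Rightarrow> (nat \<Rightarrow> nat) \<Rightarrow> real" where
  "EM \<equiv> acr_EM_n l lam mu th"

definition type_gain :: "nat \<Rightarrow> real \<Rightarrow> (nat \<Rightarrow> nat) \<Rightarrow> nat \<Rightarrow> real" where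
  "type_gain n u A k =
     lam k * EM n u (add_unit A k)
   + mu k * (real (fst (acr_job k A)) + EM n u (snd (acr_job k A)))
   + th * real (A k) * EM n u (remove_unit A k)"

definition gain :: "nat \<Rightarrow> (nat \<Rightarrow> nat) \<Rightarrow> real \<Rightarrow> real" where
  "gain n A u = (\<Sum>k\<le>l. type_gain n u A k)"

lemma rate_eq: "rate A = (\<Sum>k\<le>l. lam k + mu k + th * real (A k))"
  unfolding acr_rate_def acr_trans_def
  by (simp add: sum_list_map_upt_Suc o_def sum.distrib del: upt_Suc)

lemma rate_add_unit:
  assumes "j \<le> l"
  shows "rate (add_unit A j) = rate A + th"
proof -
  have "(\<Sum>k\<le>l. lam k + mu k + th * real (add_unit A j k))
      = (\<Sum>k\<le>l. (lam k + mu k + th * real (A k)) + (if k = j then th else 0))"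
    by (rule sum.cong) (auto simp: add_unit_def algebra_simps)
  then show ?thesis
    using assms by (simp add: rate_eq sum.distrib)
qed

lemma EM_Suc: "EM (Suc n) t A = exp_conv (rate A) (gain n A) t"
proof -
  have "(\<Sum>(r, k, B) \<leftarrow> acr_trans l lam mu th A. r * (real k + EM n u B)) = gain n A u" for u
    unfolding acr_trans_def gain_def type_gain_def add_unit_def remove_unit_def
    by (simp add: sum_list_map_upt_Suc o_def sum.distrib case_prod_beta distrib_left del: upt_Suc)
  then show ?thesis
    by (simp add: exp_conv_def)
qed

lemma EM_neg: "t < 0 \<Longrightarrow> EM n t A = 0"
  by (cases n) simp_all

lemma continuous_on_EM: "continuous_on {0..T} (\<lambda>t. EM n t A)"
proof (induction n arbitrary: A T)
  case 0
  then show ?case by simp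
next
  case (Suc n)
  have "continuous_on {0..T} (gain n A)"
    unfolding gain_def type_gain_def by (intro continuous_intros Suc)
  then show ?case
    unfolding EM_Suc by (rule continuous_on_exp_conv)
qed

lemma continuous_on_gain: "continuous_on {0..T} (gain n A)"
  unfolding gain_def type_gain_def by (intro continuous_intros continuous_on_EM)

end

locale acr_chain = acr_params +
  assumes lam_nonneg: "\<forall>k\<le>l. 0 \<le> lam k"
    and mu_nonneg: "\<forall>k\<le>l. 0 \<le> mu k"
    and th_nonneg: "0 \<le> th"
begin

lemma EM_nonneg: "0 \<le> EM n t A"
proof (induction n arbitrary: t A)
  case 0
  then show ?case by simp
next
  case (Suc n)
  have "0 \<le> gain n A u" for u
    unfolding gain_def type_gain_def using lam_nonneg mu_nonneg th_nonneg Suc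
    by (intro sum_nonneg add_nonneg_nonneg mult_nonneg_nonneg) auto
  then show ?case
    unfolding EM_Suc by (intro exp_conv_nonneg continuous_on_gain)
qed

lemma EM_le_Suc: "EM n t A \<le> EM (Suc n) t A"
proof (induction n arbitrary: t A)
  case 0
  then show ?case using EM_nonneg[of "Suc 0" t A] by simp
next
  case (Suc n)
  have "gain n A u \<le> gain (Suc n) A u" for u
    unfolding gain_def type_gain_def using lam_nonneg mu_nonneg th_nonneg Suc
    by (intro sum_mono add_mono mult_left_mono) auto
  then show ?case
    unfolding EM_Suc[of "Suc n"] EM_Suc[of n] by (intro exp_conv_mono continuous_on_gain)
qed

lemma EM_le_linear:
  assumes "0 \<le> t"
  shows "EM n t A \<le> (\<Sum>k\<le>l. mu k) * t"
  using assms
proof (induction n arbitrary: t A)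
  case 0
  then show ?case
    using mu_nonneg by (simp, intro mult_nonneg_nonneg sum_nonneg) auto
next
  case (Suc n)
  define M where "M = (\<Sum>k\<le>l. mu k)"
  have "gain n A u \<le> M + rate A * M * u" if "u \<in> {0..t}" for u
  proof -
    have IH: "EM n u X \<le> M * u" for X
      using Suc.IH[of u X] that by (simp add: M_def)
    have "type_gain n u A k \<le> mu k + (lam k + mu k + th * real (A k)) * (M * u)" if "k \<le> l" for k
    proof -
      have "real (fst (acr_job k A)) \<le> 1"
        by (simp add: acr_job_def)
      then have "mu k * (real (fst (acr_job k A)) + EM n u (snd (acr_job k A))) \<le> mu k * (1 + M * u)"
        using IH mu_nonneg that by (intro mult_left_mono add_mono) auto
      moreover have "lam k * EM n u (add_unit A k) \<le> lam k * (M * u)"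
        using IH lam_nonneg that by (intro mult_left_mono) auto
      moreover have "th * real (A k) * EM n u (remove_unit A k) \<le> th * real (A k) * (M * u)"
        using IH th_nonneg by (intro mult_left_mono) auto
      ultimately show ?thesis
        unfolding type_gain_def by (simp add: algebra_simps)
    qed
    then have "gain n A u \<le> (\<Sum>k\<le>l. mu k + (lam k + mu k + th * real (A k)) * (M * u))"
      unfolding gain_def by (intro sum_mono) simp
    also have "\<dots> = M + rate A * M * u"
      by (simp add: sum.distrib M_def rate_eq sum_distrib_right[symmetric] mult.assoc)
    finally show ?thesis .
  qed
  then have "EM (Suc n) t A \<le> exp_conv (rate A) (\<lambda>u. M + rate A * M * u) t"
    unfolding EM_Suc by (intro exp_conv_mono continuous_on_gain continuous_intros)
  also have "\<dots> = M * t"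
    by (rule exp_conv_affine[OF Suc.prems])
  finally show ?case
    by (simp add: M_def)
qed

lemma type_gain_add_flex:
  assumes bounds: "flex_agent_bounds l (EM n u)" and k: "k \<le> l"
  shows "type_gain n u (add_unit A 0) k
    \<le> lam k + mu k + th * real (A k) + type_gain n u A k + (if k = 0 then th * EM n u A else 0)"
proof -
  have abandon: "th * real (add_unit A 0 k) * EM n u (remove_unit (add_unit A 0) k)
      = th * real (A k) * EM n u (add_unit (remove_unit A k) 0) + (if k = 0 then th * EM n u A else 0)"
    by (simp add: mult.assoc abandon_add_unit distrib_left)
  have "lam k * EM n u (add_unit (add_unit A 0) k) \<le> lam k * (1 + EM n u (add_unit A k))"
    using lam_nonneg k flex_agent_bounds_add_flex[OF bounds, of "add_unit A k"]
    by (intro mult_left_mono) (auto simp: add_unit_commute)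
  moreover have "mu k * (real (fst (acr_job k (add_unit A 0))) + EM n u (snd (acr_job k (add_unit A 0))))
      \<le> mu k * (1 + (real (fst (acr_job k A)) + EM n u (snd (acr_job k A))))"
    using mu_nonneg k acr_job_value_add_flex[OF bounds k] by (intro mult_left_mono) auto
  moreover have "th * real (A k) * EM n u (add_unit (remove_unit A k) 0)
      \<le> th * real (A k) * (1 + EM n u (remove_unit A k))"
    using th_nonneg flex_agent_bounds_add_flex[OF bounds] by (intro mult_left_mono) auto
  ultimately show ?thesis
    unfolding type_gain_def abandon by (cases "k = 0") (simp_all add: ring_distribs)
qed

text \<open>The abandonment clock of the added agent counts towards type j on the left and type 0
  on the right; the two correction terms cancel after summing over k.\<close>

lemma type_gain_add_spec:
  assumes bounds: "flex_agent_bounds l (EM n u)" and k: "k \<le> l" and j: "j \<le> l"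
  shows "type_gain n u (add_unit A j) k + (if k = 0 then th * EM n u A else 0)
    \<le> type_gain n u (add_unit A 0) k + (if k = j then th * EM n u A else 0)"
proof -
  have abandon: "th * real (add_unit A i k) * EM n u (remove_unit (add_unit A i) k)
      = th * real (A k) * EM n u (add_unit (remove_unit A k) i) + (if k = i then th * EM n u A else 0)"
    for i by (simp add: mult.assoc abandon_add_unit distrib_left)
  have "lam k * EM n u (add_unit (add_unit A j) k) \<le> lam k * EM n u (add_unit (add_unit A 0) k)"
    using lam_nonneg k flex_agent_bounds_add_spec[OF bounds j, of "add_unit A k"]
    by (intro mult_left_mono) (auto simp: add_unit_commute)
  moreover have "mu k * (real (fst (acr_job k (add_unit A j))) + EM n u (snd (acr_job k (add_unit A j))))
      \<le> mu k * (real (fst (acr_job k (add_unit A 0))) + EM n u (snd (acr_job k (add_unit A 0))))"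
    using mu_nonneg k acr_job_value_add_spec[OF bounds k j] by (intro mult_left_mono) auto
  moreover have "th * real (A k) * EM n u (add_unit (remove_unit A k) j)
      \<le> th * real (A k) * EM n u (add_unit (remove_unit A k) 0)"
    using th_nonneg flex_agent_bounds_add_spec[OF bounds j] by (intro mult_left_mono) auto
  ultimately show ?thesis
    unfolding type_gain_def abandon by simp
qed

lemma gain_add_flex:
  assumes "flex_agent_bounds l (EM n u)"
  shows "gain n (add_unit A 0) u \<le> rate A + gain n A u + th * EM n u A"
proof -
  have "gain n (add_unit A 0) u
      \<le> (\<Sum>k\<le>l. lam k + mu k + th * real (A k) + type_gain n u A k + (if k = 0 then th * EM n u A else 0))"
    unfolding gain_def using type_gain_add_flex[OF assms] by (intro sum_mono) simp
  also have "\<dots> = rate A + gain n A u + th * EM n u A"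
    by (simp add: sum.distrib rate_eq gain_def)
  finally show ?thesis .
qed

lemma gain_add_spec:
  assumes "flex_agent_bounds l (EM n u)" "j \<le> l"
  shows "gain n (add_unit A j) u \<le> gain n (add_unit A 0) u"
proof -
  have "(\<Sum>k\<le>l. type_gain n u (add_unit A j) k + (if k = 0 then th * EM n u A else 0))
      \<le> (\<Sum>k\<le>l. type_gain n u (add_unit A 0) k + (if k = j then th * EM n u A else 0))"
    using type_gain_add_spec[OF assms(1) _ assms(2)] by (intro sum_mono) simp
  then show ?thesis
    using assms(2) by (simp add: sum.distrib gain_def)
qed

lemma flex_agent_bounds_EM: "flex_agent_bounds l (EM n t)"
proof (induction n arbitrary: t)
  case 0
  then show ?case
    by (simp add: flex_agent_bounds_def)
next
  case (Suc n)
  have flex: "EM (Suc n) t (add_unit A 0) \<le> 1 + EM (Suc n) t A" for A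
  proof (cases "t < 0")
    case True
    then show ?thesis by (simp add: EM_neg)
  next
    case False
    have EM_le: "th * EM n u A \<le> th + th * exp_conv (rate A) (gain n A) u" for u
      using mult_left_mono[OF EM_le_Suc[of n u A] th_nonneg] th_nonneg unfolding EM_Suc by linarith
    have "gain n (add_unit A 0) u \<le> (rate A + th) * 1 + (gain n A u + th * exp_conv (rate A) (gain n A) u)" for u
      unfolding mult_1_right using gain_add_flex[OF Suc.IH, of A u] EM_le[of u] by linarith
    then have "exp_conv (rate A + th) (gain n (add_unit A 0)) t \<le> 1 + exp_conv (rate A) (gain n A) t"
      using False by (intro exp_conv_le_add_exp_conv continuous_on_gain) auto
    then show ?thesis
      by (simp only: EM_Suc rate_add_unit[OF le0])
  qed
  have spec: "EM (Suc n) t (add_unit A j) \<le> EM (Suc n) t (add_unit A 0)" if "j \<le> l" for A j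
    unfolding EM_Suc rate_add_unit[OF that] rate_add_unit[OF le0]
    using gain_add_spec[OF Suc.IH that] by (intro exp_conv_mono continuous_on_gain)
  show ?case
    unfolding flex_agent_bounds_def using flex spec by blast
qed

lemma flex_agent_bounds_acr_EM:
  assumes "0 \<le> t"
  shows "flex_agent_bounds l (acr_EM l lam mu th t)"
proof -
  have bdd: "bdd_above (range (\<lambda>n. EM n t A))" for A
    using EM_le_linear[OF assms] by (intro bdd_aboveI) auto
  show ?thesis
    unfolding flex_agent_bounds_def acr_EM_def
    using SUP_le_add_SUP[OF bdd, of _ 1] SUP_le_add_SUP[OF bdd, of _ 0]
      flex_agent_bounds_add_flex[OF flex_agent_bounds_EM] flex_agent_bounds_add_spec[OF flex_agent_bounds_EM]
    by auto
qed

end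

theorem lemma1:
  fixes l :: nat and lam mu :: "nat \<Rightarrow> real" and th T :: real
    and A :: "nat \<Rightarrow> nat" and i :: nat
  assumes "\<forall>k\<le>l. lam k > 0" and "\<forall>k\<le>l. mu k > 0" and "th > 0"
    and "T \<ge> 0" and "\<forall>k>l. A k = 0" and "i \<le> l"
  shows "1 + acr_EM l lam mu th T A \<ge> acr_EM l lam mu th T (add_unit A 0)
       \<and> acr_EM l lam mu th T (add_unit A 0) \<ge> acr_EM l lam mu th T (add_unit A i)"
proof -
  interpret acr_chain l lam mu th
    using assms(1-3) by unfold_locales auto
  have "flex_agent_bounds l (acr_EM l lam mu th T)"
    using assms(4) by (rule flex_agent_bounds_acr_EM)
  then show ?thesis
    using assms(6) by (simp add: flex_agent_bounds_def)
qed

end
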